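(* If a connected graph $G$ belongs to $\mathfrak{F}$, then $G\in\mathcal{P}$. That is, $\mathfrak{F}\subset\mathcal{P}$.
   Context: Graphs are finite, simple and undirected. $\mathbb{T}=\{z\in\mathbb{C}:|z|=1\}$, $\mathbb{I}=[0,2\pi)$. A $\mathbb{T}$-gain on $G$ is a map $\varphi$ from oriented edges to $\mathbb{T}$ with $\varphi(\overrightarrow{e_{ts}})=\varphi(\overrightarrow{e_{st}})^{-1}$; $A(\Phi)$ for $\Phi=(G,\varphi)$ is the Hermitian matrix with $(s,t)$ entry $\varphi(\overrightarrow{e_{st}})$ if $v_s\sim v_t$, else $0$; $\mathcal{T}_G$ is the set of all $\mathbb{T}$-gain graphs on $G$. $\Re(A)\ge0$ means the real part of every entry of $A$ is nonnegative. The gain of a directed cycle is the product of gains of its oriented edges. A rooted spanning tree $T$ with root $v_r$ induces the tree order ($v_x\le v_y$ iff $v_x$ is on the $T$-path from $v_r$ to $v_y$); $T$ is normal if adjacent vertices of $G$ are always comparable. The suitably oriented graph $\overrightarrow{G_T}$ orients each edge $e_{st}$ with $v_s\le v_t$ as $\overrightarrow{e_{st}}$ if $e_{st}\in E(T)$ and as $\overrightarrow{e_{ts}}$ otherwise; the $m-n+1$ fundamental cycles $C_j$ of $T$ (the unique cycle in $T$ plus a non-tree edge) become directed cycles $\overrightarrow{C_j(T)}$. For $r=(c_1,\dots,c_{m-n+1})\in\mathbb{I}^{m-n+1}$, $\mathcal{A}_T(r)=\{(G,\varphi)\in\mathcal{T}_G:\varphi(\overrightarrow{C_j(T)})=e^{ic_j}\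 \forall j\}$. $G$ has property GNRP (w.r.t. normal spanning tree $T$) if for each $r$ there is $\Phi\in\mathcal{A}_T(r)$ with $\Re(A(\Phi))\ge0$; $\mathcal{P}$ is the class of connected graphs with GNRP. The sum $G_1+G_2$ of subgraphs is the subgraph consisting of all edges in $G_1$ or $G_2$. A fundamental subgraph of $G$ w.r.t. $T$ is the sum $C_1+\cdots+C_s$ of a maximal collection of fundamental cycles such that the intersection of $C_1+\cdots+C_s$ with $T$ is a subtree. A fundamental subgraph built from fundamental cycles $C_1,\dots,C_s$ has the distinguished edge property (DEP) if these cycles can be ordered $C_{k_1},\dots,C_{k_s}$ so that $|E(C_{k_i})\setminus E(C_{k_1}+\cdots+C_{k_{i-1}})|>1$ for all $i=2,\dots,s$. A connected graph $G$ has DEP if every fundamental subgraph of $G$ with respect to a normal spanning tree $T$ has DEP; $\mathfrak{F}$ is the collection of connected graphs with DEP. *)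

theory Defs
  imports Complex_Main
begin

definition simple_graph :: "'a set \<Rightarrow> 'a set set \<Rightarrow> bool" where
  "simple_graph V E \<longleftrightarrow> finite V \<and>
     (\<forall>e\<in>E. \<exists>u v. u \<in> V \<and> v \<in> V \<and> u \<noteq> v \<and> e = {u, v})"

definition reach :: "'a set set \<Rightarrow> 'a \<Rightarrow> 'a \<Rightarrow> bool" where
  "reach F = (\<lambda>x y. {x, y} \<in> F)\<^sup>*\<^sup>*"

definition connected_graph :: "'a set \<Rightarrow> 'a set set \<Rightarrow> bool" where
  "connected_graph V E \<longleftrightarrow> V \<noteq> {} \<and> (\<forall>x\<in>V. \<forall>y\<in>V. reach E x y)"

definition is_path :: "'a set set \<Rightarrow> 'a list \<Rightarrow> bool" where
  "is_path F p \<longleftrightarrow> p \<noteq> [] \<and> distinct p \<and> (\<forall>i. Suc i < length p \<longrightarrow> {p ! i, p ! Suc i} \<in> F)"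

definition path_edges :: "'a list \<Rightarrow> 'a set set" where
  "path_edges p = {{p ! i, p ! Suc i} | i. Suc i < length p}"

definition is_cycle :: "'a set set \<Rightarrow> 'a list \<Rightarrow> bool" where
  "is_cycle F c \<longleftrightarrow> length c \<ge> 3 \<and> is_path F c \<and> {last c, hd c} \<in> F"

definition acyclic_edges :: "'a set set \<Rightarrow> bool" where
  "acyclic_edges F \<longleftrightarrow> \<not> (\<exists>c. is_cycle F c)"

definition tree_le :: "'a set set \<Rightarrow> 'a \<Rightarrow> 'a \<Rightarrow> 'a \<Rightarrow> bool" where
  "tree_le T r x y \<longleftrightarrow> (\<exists>p. is_path T p \<and> hd p = r \<and> last p = y \<and> x \<in> set p)"

definition spanning_tree :: "'a set \<Rightarrow> 'a set set \<Rightarrow> 'a set set \<Rightarrow> bool" where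
  "spanning_tree V E T \<longleftrightarrow> T \<subseteq> E \<and> connected_graph V T \<and> acyclic_edges T"

definition normal_spanning_tree :: "'a set \<Rightarrow> 'a set set \<Rightarrow> 'a set set \<Rightarrow> 'a \<Rightarrow> bool" where
  "normal_spanning_tree V E T r \<longleftrightarrow> spanning_tree V E T \<and> r \<in> V \<and>
     (\<forall>x y. {x, y} \<in> E \<longrightarrow> tree_le T r x y \<or> tree_le T r y x)"

text \<open>T-gains: phi x y is the gain of the oriented edge from x to y.\<close>
definition is_T_gain :: "'a set set \<Rightarrow> ('a \<Rightarrow> 'a \<Rightarrow> complex) \<Rightarrow> bool" where
  "is_T_gain E \<phi> \<longleftrightarrow> (\<forall>x y. {x, y} \<in> E \<longrightarrow> cmod (\<phi> x y) = 1 \<and> \<phi> y x = inverse (\<phi> x y))"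

text \<open>Adjacency matrix A(Phi), indexed by pairs of vertices.\<close>
definition gain_adj :: "'a set set \<Rightarrow> ('a \<Rightarrow> 'a \<Rightarrow> complex) \<Rightarrow> 'a \<Rightarrow> 'a \<Rightarrow> complex" where
  "gain_adj E \<phi> x y = (if {x, y} \<in> E then \<phi> x y else 0)"

definition re_nonneg :: "'a set \<Rightarrow> 'a set set \<Rightarrow> ('a \<Rightarrow> 'a \<Rightarrow> complex) \<Rightarrow> bool" where
  "re_nonneg V E \<phi> \<longleftrightarrow> (\<forall>x\<in>V. \<forall>y\<in>V. Re (gain_adj E \<phi> x y) \<ge> 0)"

definition walk_gain :: "('a \<Rightarrow> 'a \<Rightarrow> complex) \<Rightarrow> 'a list \<Rightarrow> complex" where
  "walk_gain \<phi> p = (\<Prod>i<length p - 1. \<phi> (p ! i) (p ! Suc i))"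

text \<open>The fundamental cycle of a
  non-tree edge {s,t} with s \<le> t, suitably oriented, is the T-path from s down to t followed by
  the edge from t to s; the prescribed cycle gains are indexed by the non-tree edges.\<close>
definition GNRP_wrt :: "'a set \<Rightarrow> 'a set set \<Rightarrow> 'a set set \<Rightarrow> 'a \<Rightarrow> bool" where
  "GNRP_wrt V E T r \<longleftrightarrow>
    (\<forall>c :: 'a set \<Rightarrow> real. (\<forall>e \<in> E - T. 0 \<le> c e \<and> c e < 2 * pi) \<longrightarrow>
      (\<exists>\<phi>. is_T_gain E \<phi> \<and>
         (\<forall>s t p. {s, t} \<in> E - T \<and> tree_le T r s t \<and> is_path T p \<and> hd p = s \<and> last p = t \<longrightarrow>
              walk_gain \<phi> p * \<phi> t s = exp (\<i> * complex_of_real (c {s, t}))) \<and>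
         re_nonneg V E \<phi>))"

definition fund_cycle :: "'a set set \<Rightarrow> 'a set \<Rightarrow> 'a set set" where
  "fund_cycle T e = insert e (\<Union>{path_edges p | p. is_path T p \<and> {hd p, last p} = e})"

definition sum_cycles :: "'a set set \<Rightarrow> 'a set set \<Rightarrow> 'a set set" where
  "sum_cycles T S = \<Union>(fund_cycle T ` S)"

definition is_subtree :: "'a set set \<Rightarrow> 'a set set \<Rightarrow> bool" where
  "is_subtree T F \<longleftrightarrow> F \<subseteq> T \<and> (\<forall>x\<in>\<Union>F. \<forall>y\<in>\<Union>F. reach F x y)"

text \<open>S (a set of non-tree edges, i.e. of fundamental cycles) is a maximal collection whose sum
  meets T in a subtree; its sum is then a fundamental subgraph.\<close>
definition fundamental_collection :: "'a set set \<Rightarrow> 'a set set \<Rightarrow> 'a set set \<Rightarrow> bool" where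
  "fundamental_collection E T S \<longleftrightarrow>
     S \<subseteq> E - T \<and> is_subtree T (sum_cycles T S \<inter> T) \<and>
     (\<forall>S'. S \<subset> S' \<and> S' \<subseteq> E - T \<longrightarrow> \<not> is_subtree T (sum_cycles T S' \<inter> T))"

definition DEP_collection :: "'a set set \<Rightarrow> 'a set set \<Rightarrow> bool" where
  "DEP_collection T S \<longleftrightarrow>
     (\<exists>ks. distinct ks \<and> set ks = S \<and>
        (\<forall>i. 0 < i \<and> i < length ks \<longrightarrow>
           card (fund_cycle T (ks ! i) - sum_cycles T (set (take i ks))) > 1))"

definition DEP_wrt :: "'a set set \<Rightarrow> 'a set set \<Rightarrow> bool" where
  "DEP_wrt E T \<longleftrightarrow> (\<forall>S. fundamental_collection E T S \<longrightarrow> DEP_collection T S)"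

end

theory Submission
  imports Defs
begin

(* Encode a gain by angles, phi x y = cis (theta x y) with theta antisymmetric: then
   Re A(Phi) >= 0 says cos (theta x y) >= 0 on every edge, and the gain of a fundamental cycle is
   cis of the angle sum around it.  Order the non-tree edges so that every fundamental cycle has
   at least two edges outside the earlier ones: DEP provides such an order inside each fundamental
   subgraph, and distinct fundamental subgraphs are edge-disjoint and together contain all
   non-tree edges, so these orders can be concatenated.  Along this order, give two fresh edges of
   the current cycle the same angle alpha, chosen with cos alpha >= 0 so that the angle sum of the
   cycle becomes the prescribed one modulo 2 pi (every unit complex number has a square root in
   the right half-plane); the earlier cycles do not contain these edges and keep their gains. *)

section \<open>Paths in edge sets\<close>

lemma is_path_iff_successively:
  "is_path F p \<longleftrightarrow> p \<noteq> [] \<and> distinct p \<and> successively (\<lambda>x y. {x, y} \<in> F) p"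
  by (simp add: is_path_def successively_conv_nth)

lemma is_path_rev: "is_path F p \<Longrightarrow> is_path F (rev p)"
  by (simp add: is_path_iff_successively successively_rev insert_commute)

lemma is_path_appendD: "is_path F (p @ q) \<Longrightarrow> p \<noteq> [] \<Longrightarrow> is_path F p"
  by (simp add: is_path_iff_successively successively_append_iff)

lemma reach_sym: "reach F x y \<Longrightarrow> reach F y x"
  unfolding reach_def
proof (induction rule: rtranclp_induct)
  case (step y z)
  then have "{z, y} \<in> F" by (simp add: insert_commute)
  with step.IH show ?case by (meson converse_rtranclp_into_rtranclp)
qed simp

lemma reach_trans: "reach F x y \<Longrightarrow> reach F y z \<Longrightarrow> reach F x z"
  unfolding reach_def by (rule rtranclp_trans)

lemma reach_mono: "reach F x y \<Longrightarrow> F \<subseteq> F' \<Longrightarrow> reach F' x y"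
  unfolding reach_def by (erule rtranclp_mono[THEN predicate2D, rotated]) auto

lemma reach_imp_path:
  assumes "reach F x y" shows "\<exists>p. is_path F p \<and> hd p = x \<and> last p = y"
  using assms unfolding reach_def
proof (induction rule: rtranclp_induct)
  case base
  show ?case by (intro exI[of _ "[x]"]) (simp add: is_path_def)
next
  case (step y z)
  then obtain p where p: "is_path F p" "hd p = x" "last p = y" by blast
  show ?case
  proof (cases "z \<in> set p")
    case True
    then obtain p1 p2 where p12: "p = p1 @ z # p2" by (meson split_list)
    then have "is_path F (p1 @ [z])"
      using p(1) is_path_appendD[of F "p1 @ [z]" p2] by simp
    moreover have "hd (p1 @ [z]) = x" using p(2) p12 by (cases p1) auto
    ultimately show ?thesis by (intro exI[of _ "p1 @ [z]"]) simp
  next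
    case False
    then have "is_path F (p @ [z])"
      using p step(2) by (simp add: is_path_iff_successively successively_append_iff)
    moreover have "hd (p @ [z]) = x" using p by (simp add: is_path_def)
    ultimately show ?thesis by (intro exI[of _ "p @ [z]"]) simp
  qed
qed

lemma path_edges_conv_image: "path_edges p = (\<lambda>i. {p ! i, p ! Suc i}) ` {..<length p - 1}"
  by (auto simp: path_edges_def)

lemma path_edges_Cons_Cons [simp]: "path_edges (x # y # p) = insert {x, y} (path_edges (y # p))"
  unfolding path_edges_conv_image by (simp add: lessThan_Suc_eq_insert_0 image_image)

lemma path_edges_snoc:
  assumes "p \<noteq> []" shows "path_edges (p @ [s]) = insert {last p, s} (path_edges p)"
proof -
  obtain n where n: "length p = Suc n" using assms by (cases p) auto
  have "path_edges (p @ [s]) = (\<lambda>i. {(p @ [s]) ! i, (p @ [s]) ! Suc i}) ` insert n {..<n}"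
    unfolding path_edges_conv_image by (simp add: n lessThan_Suc)
  also have "\<dots> = insert {last p, s} (path_edges p)"
    unfolding path_edges_conv_image using n assms
    by (auto simp: nth_append last_conv_nth)
  finally show ?thesis .
qed

lemma path_edges_rev [simp]: "path_edges (rev p) = path_edges p"
proof (induction p)
  case (Cons x p)
  show ?case
  proof (cases "p = []")
    case False
    have "path_edges (rev p @ [x]) = insert {last (rev p), x} (path_edges (rev p))"
      by (rule path_edges_snoc) (simp add: False)
    also have "\<dots> = path_edges (x # p)"
      using Cons.IH False by (cases p) (simp_all add: last_rev insert_commute)
    finally show ?thesis by simp
  qed simp
qed simp

lemma path_edges_subset: "is_path F p \<Longrightarrow> path_edges p \<subseteq> F"
  by (auto simp: is_path_def path_edges_def)

lemma path_edges_vertices: "\<Union> (path_edges p) \<subseteq> set p"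
  by (auto simp: path_edges_def)

lemma reach_path_edges_hd: "i < length p \<Longrightarrow> reach (path_edges p) (hd p) (p ! i)"
proof (induction i)
  case 0
  then show ?case by (simp add: reach_def hd_conv_nth)
next
  case (Suc i)
  then have "{p ! i, p ! Suc i} \<in> path_edges p" by (auto simp: path_edges_def)
  with Suc show ?case unfolding reach_def by (simp add: rtranclp.rtrancl_into_rtrancl)
qed

lemma reach_path_edges: "x \<in> set p \<Longrightarrow> y \<in> set p \<Longrightarrow> reach (path_edges p) x y"
  by (metis in_set_conv_nth reach_path_edges_hd reach_sym reach_trans)

lemma path_steps_neq:
  assumes "distinct p" "i < j" "Suc j < length p"
  shows "{p ! i, p ! Suc i} \<noteq> {p ! j, p ! Suc j}"
proof -
  have "p ! i \<noteq> p ! j" "p ! i \<noteq> p ! Suc j"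
    using assms by (simp_all add: nth_eq_iff_index_eq)
  then show ?thesis by (auto simp: doubleton_eq_iff)
qed

lemma is_cycle_of_two_paths:
  assumes p: "is_path F (x # p1 @ [z])" and q: "is_path F (x # q1 @ [z])"
    and disj: "set p1 \<inter> set q1 = {}" and nonempty: "p1 \<noteq> [] \<or> q1 \<noteq> []"
  shows "is_cycle F (x # p1 @ z # rev q1)"
proof -
  define c where "c = x # p1 @ z # rev q1"
  let ?R = "\<lambda>u v. {u, v} \<in> F"
  have p_succ: "successively ?R ((x # p1) @ [z])" and q_succ: "successively ?R (x # q1 @ [z])"
    using p q by (simp_all add: is_path_iff_successively)
  have "successively ?R (x # p1)" "?R (last (x # p1)) z"
    using p_succ[unfolded successively_append_iff] by auto
  moreover have "successively ?R (rev (x # q1 @ [z]))"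
    using q_succ by (simp only: successively_rev insert_commute)
  ultimately have "successively ?R ((x # p1) @ rev (x # q1 @ [z]))"
    by (subst successively_append_iff) simp
  then have "successively ?R (c @ [x])" by (simp add: c_def)
  then have "successively ?R c" "{last c, hd c} \<in> F"
    using successively_append_iff[of ?R c "[x]"] by (auto simp: c_def)
  moreover have "distinct c" using p q disj by (auto simp: c_def is_path_def)
  moreover have "length c \<ge> 3" using nonempty by (cases p1; cases q1) (simp_all add: c_def)
  ultimately show ?thesis unfolding c_def by (simp add: is_cycle_def is_path_iff_successively)
qed

lemma acyclic_path_unique:
  assumes acyclic: "acyclic_edges F"
  shows "is_path F p \<Longrightarrow> is_path F q \<Longrightarrow> hd p = hd q \<Longrightarrow> last p = last q \<Longrightarrow> p = q"
proof (induction p arbitrary: q)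
  case Nil
  then show ?case by (simp add: is_path_def)
next
  case (Cons x p')
  then obtain q' where q: "q = x # q'" by (cases q) (auto simp: is_path_def)
  have last_Cons_eq: "last (x # ys) = x \<longleftrightarrow> ys = []" if "distinct (x # ys)" for ys
    using that by (cases ys rule: rev_cases) auto
  have "p' = [] \<longleftrightarrow> q' = []"
    using Cons.prems(1,2,4) q last_Cons_eq by (metis is_path_def)
  then consider "p' = []" "q' = []" | "p' \<noteq> []" "q' \<noteq> []" by blast
  then show ?case
  proof cases
    case 2
    have p': "is_path F p'" and q'_path: "is_path F q'"
      using Cons.prems(1,2) 2 q by (auto simp: is_path_iff_successively successively_Cons)
    have same_last: "last p' = last q'" using Cons.prems(4) q 2 by simp
    show ?thesis
    proof (cases "hd p' = hd q'")
      case True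
      then show ?thesis using Cons.IH[OF p' q'_path True same_last] q by simp
    next
      case False
      have "\<exists>v\<in>set p'. v \<in> set q'" using same_last 2 by (metis last_in_set)
      then obtain p1 z p2 where p12: "p' = p1 @ z # p2" "z \<in> set q'" "\<forall>v\<in>set p1. v \<notin> set q'"
        using split_list_first_prop[of p' "\<lambda>v. v \<in> set q'"] by blast
      obtain q1 q2 where q12: "q' = q1 @ z # q2" using p12(2) by (meson split_list)
      have "is_path F (x # p1 @ [z])"
        using Cons.prems(1) p12(1) is_path_appendD[of F "x # p1 @ [z]" p2] by simp
      moreover have "is_path F (x # q1 @ [z])"
        using Cons.prems(2) q q12 is_path_appendD[of F "x # q1 @ [z]" q2] by simp
      moreover have "set p1 \<inter> set q1 = {}" using p12(3) q12 by auto
      moreover have "p1 \<noteq> [] \<or> q1 \<noteq> []" using False p12(1) q12 by auto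
      ultimately have "is_cycle F (x # p1 @ z # rev q1)" by (rule is_cycle_of_two_paths)
      with acyclic show ?thesis by (auto simp: acyclic_edges_def)
    qed
  qed (use q in simp)
qed

lemma tree_le_antisym:
  assumes acyclic: "acyclic_edges T" and "tree_le T r s t" "tree_le T r t s"
  shows "s = t"
proof -
  obtain p where p: "is_path T p" "hd p = r" "last p = t" "s \<in> set p"
    using assms(2) by (auto simp: tree_le_def)
  obtain q where q: "is_path T q" "hd q = r" "last q = s" "t \<in> set q"
    using assms(3) by (auto simp: tree_le_def)
  obtain p1 p2 where p12: "p = p1 @ s # p2" using p(4) by (meson split_list)
  have "is_path T (p1 @ [s])" using p(1) p12 is_path_appendD[of T "p1 @ [s]" p2] by simp
  moreover have "hd (p1 @ [s]) = r" using p(2) p12 by (cases p1) auto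
  ultimately have "q = p1 @ [s]" using acyclic_path_unique[OF acyclic q(1)] q by simp
  moreover have "t \<in> set (s # p2)" using p(3) p12 by (metis last_appendR last_in_set list.distinct(1))
  moreover have "distinct p" using p(1) by (simp add: is_path_def)
  ultimately show ?thesis using p12 q(4) by auto
qed

lemma oriented_fund_cycle_unique:
  assumes acyclic: "acyclic_edges T" and "s \<noteq> t" "{s', t'} = {s, t}"
    and "tree_le T r s t" "is_path T p" "hd p = s" "last p = t"
    and "tree_le T r s' t'" "is_path T p'" "hd p' = s'" "last p' = t'"
  shows "s' = s \<and> t' = t \<and> p' = p"
proof -
  have "s' = s" "t' = t"
    using assms(2,3) tree_le_antisym[OF acyclic assms(4)] assms(8) by (auto simp: doubleton_eq_iff)
  then show ?thesis using acyclic_path_unique[OF acyclic assms(9,5)] assms(6,7,10,11) by simp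
qed

lemma fund_cycle_eq:
  assumes acyclic: "acyclic_edges T" and p: "is_path T p" "hd p = s" "last p = t"
  shows "fund_cycle T {s, t} = insert {s, t} (path_edges p)"
proof -
  have "path_edges p' = path_edges p" if "is_path T p'" "{hd p', last p'} = {s, t}" for p'
  proof -
    from that(2) consider "hd p' = s" "last p' = t" | "hd (rev p') = s" "last (rev p') = t"
      using that(1) by (auto simp: doubleton_eq_iff hd_rev last_rev is_path_def)
    then show ?thesis
    proof cases
      case 1
      then show ?thesis using acyclic_path_unique[OF acyclic that(1) p(1)] p by simp
    next
      case 2
      then have "rev p' = p" using acyclic_path_unique[OF acyclic is_path_rev[OF that(1)] p(1)] p
        by simp
      then show ?thesis by (metis path_edges_rev)
    qed
  qed
  then have "{path_edges p' | p'. is_path T p' \<and> {hd p', last p'} = {s, t}} = {path_edges p}"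
    using p by blast
  then show ?thesis unfolding fund_cycle_def by simp
qed

lemma path_edges_closed_subset_fund_cycle:
  assumes "is_path T p" "hd p = s" "last p = t"
  shows "path_edges (p @ [s]) \<subseteq> fund_cycle T {s, t}"
proof -
  have "p \<noteq> []" using assms(1) by (simp add: is_path_def)
  then have "path_edges (p @ [s]) = insert {s, t} (path_edges p)"
    using assms(3) by (simp add: path_edges_snoc insert_commute)
  then show ?thesis using assms unfolding fund_cycle_def by blast
qed

lemma is_subtree_Un:
  assumes "is_subtree T F1" "is_subtree T F2" "g \<in> F1" "g \<in> F2" "g \<noteq> {}"
  shows "is_subtree T (F1 \<union> F2)"
proof -
  obtain v where v: "v \<in> g" using assms(5) by blast
  have "reach (F1 \<union> F2) x v" if "x \<in> \<Union> (F1 \<union> F2)" for x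
  proof -
    from that consider "x \<in> \<Union> F1" | "x \<in> \<Union> F2" by blast
    then show ?thesis
    proof cases
      case 1
      then have "reach F1 x v" using assms(1,3) v by (auto simp: is_subtree_def)
      then show ?thesis by (rule reach_mono) blast
    next
      case 2
      then have "reach F2 x v" using assms(2,4) v by (auto simp: is_subtree_def)
      then show ?thesis by (rule reach_mono) blast
    qed
  qed
  then show ?thesis
    using assms(1,2) unfolding is_subtree_def by (blast intro: reach_trans reach_sym)
qed

section \<open>Gains given by angles\<close>

definition angle_sum :: "('a \<Rightarrow> 'a \<Rightarrow> real) \<Rightarrow> 'a list \<Rightarrow> real" where
  "angle_sum \<theta> p = (\<Sum>i<length p - 1. \<theta> (p ! i) (p ! Suc i))"

lemma walk_gain_cis: "walk_gain (\<lambda>x y. cis (\<theta> x y)) p = cis (angle_sum \<theta> p)"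
  by (simp add: walk_gain_def angle_sum_def cis_conv_exp sum_distrib_left exp_sum)

lemma walk_gain_snoc:
  assumes "p \<noteq> []" shows "walk_gain \<phi> (p @ [s]) = walk_gain \<phi> p * \<phi> (last p) s"
proof -
  obtain n where n: "length p = Suc n" using assms by (cases p) auto
  have "(\<Prod>i<n. \<phi> ((p @ [s]) ! i) ((p @ [s]) ! Suc i)) = (\<Prod>i<n. \<phi> (p ! i) (p ! Suc i))"
    by (intro prod.cong) (auto simp: nth_append n)
  then show ?thesis
    using assms by (simp add: walk_gain_def n nth_append last_conv_nth)
qed

lemma angle_sum_cong:
  assumes "\<And>x y. {x, y} \<in> path_edges p \<Longrightarrow> \<theta> x y = \<theta>' x y"
  shows "angle_sum \<theta> p = angle_sum \<theta>' p"
  unfolding angle_sum_def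
proof (intro sum.cong)
  fix i assume "i \<in> {..<length p - 1}"
  then have "{p ! i, p ! Suc i} \<in> path_edges p" by (auto simp: path_edges_def)
  then show "\<theta> (p ! i) (p ! Suc i) = \<theta>' (p ! i) (p ! Suc i)" by (rule assms)
qed simp

definition set_angle :: "'a \<Rightarrow> 'a \<Rightarrow> real \<Rightarrow> ('a \<Rightarrow> 'a \<Rightarrow> real) \<Rightarrow> 'a \<Rightarrow> 'a \<Rightarrow> real" where
  "set_angle u v \<alpha> \<theta> x y = (if x = u \<and> y = v then \<alpha> else if x = v \<and> y = u then - \<alpha> else \<theta> x y)"

lemma set_angle_other: "{x, y} \<noteq> {u, v} \<Longrightarrow> set_angle u v \<alpha> \<theta> x y = \<theta> x y"
  unfolding set_angle_def by (metis insert_commute)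

lemma angle_sum_set_angle_inj:
  assumes inj: "inj_on (\<lambda>i. {q ! i, q ! Suc i}) {..<length q - 1}" and k: "k < length q - 1"
  shows "angle_sum (set_angle (q ! k) (q ! Suc k) \<alpha> \<theta>) q = angle_sum \<theta> q - \<theta> (q ! k) (q ! Suc k) + \<alpha>"
proof -
  let ?I = "{..<length q - 1} - {k}"
  have "angle_sum (set_angle (q ! k) (q ! Suc k) \<alpha> \<theta>) q
      = \<alpha> + (\<Sum>i\<in>?I. set_angle (q ! k) (q ! Suc k) \<alpha> \<theta> (q ! i) (q ! Suc i))"
    unfolding angle_sum_def using k by (simp add: sum.remove set_angle_def)
  also have "(\<Sum>i\<in>?I. set_angle (q ! k) (q ! Suc k) \<alpha> \<theta> (q ! i) (q ! Suc i))
      = (\<Sum>i\<in>?I. \<theta> (q ! i) (q ! Suc i))"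
    using inj k by (intro sum.cong refl set_angle_other) (auto dest: inj_onD)
  also have "\<dots> = angle_sum \<theta> q - \<theta> (q ! k) (q ! Suc k)"
    unfolding angle_sum_def using k by (simp add: sum.remove)
  finally show ?thesis by simp
qed

definition right_half_plane_angles :: "'a set set \<Rightarrow> ('a \<Rightarrow> 'a \<Rightarrow> real) \<Rightarrow> bool" where
  "right_half_plane_angles E \<theta> \<longleftrightarrow>
     (\<forall>x y. \<theta> y x = - \<theta> x y) \<and> (\<forall>x y. {x, y} \<in> E \<longrightarrow> 0 \<le> cos (\<theta> x y))"

lemma right_half_plane_angles_set_angle:
  assumes "right_half_plane_angles E \<theta>" "u \<noteq> v" "0 \<le> cos \<alpha>"
  shows "right_half_plane_angles E (set_angle u v \<alpha> \<theta>)"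
  unfolding right_half_plane_angles_def
proof (intro conjI allI impI)
  fix x y
  have "\<theta> y x = - \<theta> x y" using assms(1) unfolding right_half_plane_angles_def by blast
  then show "set_angle u v \<alpha> \<theta> y x = - set_angle u v \<alpha> \<theta> x y"
    using assms(2) unfolding set_angle_def by simp
  assume "{x, y} \<in> E"
  then have "0 \<le> cos (\<theta> x y)" using assms(1) unfolding right_half_plane_angles_def by blast
  then show "0 \<le> cos (set_angle u v \<alpha> \<theta> x y)"
    using assms(3) unfolding set_angle_def by simp
qed

lemma exists_half_angle_cos_nonneg: "\<exists>\<alpha>. 0 \<le> cos \<alpha> \<and> cis (2 * \<alpha>) = cis \<gamma>"
proof -
  define m where "m = \<lfloor>(\<gamma> + pi) / (2 * pi)\<rfloor>"
  define \<alpha> where "\<alpha> = (\<gamma> - 2 * pi * m) / 2"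
  have "m \<le> (\<gamma> + pi) / (2 * pi)" "(\<gamma> + pi) / (2 * pi) < m + 1"
    unfolding m_def by linarith+
  then have "2 * pi * m \<le> \<gamma> + pi" "\<gamma> + pi < 2 * pi * (m + 1)"
    by (simp_all add: pos_le_divide_eq pos_divide_less_eq mult.commute)
  then have "- (pi / 2) \<le> \<alpha>" "\<alpha> \<le> pi / 2" unfolding \<alpha>_def by (auto simp: algebra_simps)
  then have "0 \<le> cos \<alpha>" by (rule cos_ge_zero)
  moreover have "2 * \<alpha> = \<gamma> - 2 * pi * m" by (simp add: \<alpha>_def)
  then have "cis (2 * \<alpha>) = cis \<gamma> / cis (2 * pi * m)" by (simp only: cis_divide)
  ultimately show ?thesis by auto
qed

definition has_cycle_angle :: "'a set set \<Rightarrow> 'a \<Rightarrow> ('a \<Rightarrow> 'a \<Rightarrow> real) \<Rightarrow> 'a set \<Rightarrow> real \<Rightarrow> bool" where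
  "has_cycle_angle T r \<theta> e \<gamma> \<longleftrightarrow>
     (\<forall>s t p. {s, t} = e \<and> tree_le T r s t \<and> is_path T p \<and> hd p = s \<and> last p = t \<longrightarrow>
        cis (angle_sum \<theta> (p @ [s])) = cis \<gamma>)"

lemma has_cycle_angle_cong:
  assumes "\<And>x y. {x, y} \<in> fund_cycle T e \<Longrightarrow> \<theta>' x y = \<theta> x y"
  shows "has_cycle_angle T r \<theta>' e \<gamma> \<longleftrightarrow> has_cycle_angle T r \<theta> e \<gamma>"
proof -
  have "angle_sum \<theta>' (p @ [s]) = angle_sum \<theta> (p @ [s])"
    if "{s, t} = e" "is_path T p" "hd p = s" "last p = t" for s t p
    using path_edges_closed_subset_fund_cycle[OF that(2-4)] that(1) assms
    by (intro angle_sum_cong) blast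
  then show ?thesis unfolding has_cycle_angle_def by metis
qed

lemma GNRP_wrt_if_angles:
  assumes "\<And>c. \<exists>\<theta>. right_half_plane_angles E \<theta> \<and> (\<forall>e\<in>E - T. has_cycle_angle T r \<theta> e (c e))"
  shows "GNRP_wrt V E T r"
  unfolding GNRP_wrt_def
proof (intro allI impI)
  fix c :: "'a set \<Rightarrow> real"
  obtain \<theta> where \<theta>: "right_half_plane_angles E \<theta>" "\<forall>e\<in>E - T. has_cycle_angle T r \<theta> e (c e)"
    using assms by blast
  have anti: "\<theta> y x = - \<theta> x y" and cos: "{x, y} \<in> E \<Longrightarrow> 0 \<le> cos (\<theta> x y)" for x y
    using \<theta>(1) unfolding right_half_plane_angles_def by blast+
  define \<phi> where "\<phi> = (\<lambda>x y. cis (\<theta> x y))"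
  have "is_T_gain E \<phi>"
    unfolding is_T_gain_def \<phi>_def
  proof (intro allI impI conjI)
    fix x y
    show "cmod (cis (\<theta> x y)) = 1" by simp
    show "cis (\<theta> y x) = inverse (cis (\<theta> x y))" by (simp add: anti[of x y])
  qed
  moreover have "re_nonneg V E \<phi>"
    by (simp add: re_nonneg_def gain_adj_def \<phi>_def cos)
  moreover have "walk_gain \<phi> p * \<phi> t s = exp (\<i> * complex_of_real (c {s, t}))"
    if "{s, t} \<in> E - T" "tree_le T r s t" "is_path T p" "hd p = s" "last p = t" for s t p
  proof -
    have "p \<noteq> []" using that(3) by (simp add: is_path_def)
    then have "walk_gain \<phi> p * \<phi> t s = walk_gain \<phi> (p @ [s])"
      using that(5) by (simp add: walk_gain_snoc)
    also have "\<dots> = cis (angle_sum \<theta> (p @ [s]))"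
      unfolding \<phi>_def by (rule walk_gain_cis)
    also have "\<dots> = cis (c {s, t})"
      using \<theta>(2) that unfolding has_cycle_angle_def by blast
    finally show ?thesis by (simp add: cis_conv_exp)
  qed
  ultimately show "\<exists>\<phi>. is_T_gain E \<phi> \<and>
      (\<forall>s t p. {s, t} \<in> E - T \<and> tree_le T r s t \<and> is_path T p \<and> hd p = s \<and> last p = t \<longrightarrow>
         walk_gain \<phi> p * \<phi> t s = exp (\<i> * complex_of_real (c {s, t}))) \<and>
      re_nonneg V E \<phi>"
    by blast
qed

section \<open>Orders with distinguished edges\<close>

definition distinguished_edge_order :: "'a set set \<Rightarrow> 'a set list \<Rightarrow> bool" where
  "distinguished_edge_order T L \<longleftrightarrow>
     (\<forall>k<length L. 2 \<le> card (fund_cycle T (L ! k) - sum_cycles T (set (take k L))))"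

lemma distinguished_edge_order_Nil [simp]: "distinguished_edge_order T []"
  by (simp add: distinguished_edge_order_def)

lemma distinguished_edge_order_snoc:
  "distinguished_edge_order T (L @ [e]) \<longleftrightarrow>
     distinguished_edge_order T L \<and> 2 \<le> card (fund_cycle T e - sum_cycles T (set L))"
  by (auto simp: distinguished_edge_order_def nth_append less_Suc_eq)

lemma distinguished_edge_order_append:
  assumes "distinguished_edge_order T L1" "distinguished_edge_order T L2"
    and "sum_cycles T (set L1) \<inter> sum_cycles T (set L2) = {}"
  shows "distinguished_edge_order T (L1 @ L2)"
  using assms(2,3)
proof (induction L2 rule: rev_induct)
  case Nil
  then show ?case using assms(1) by simp
next
  case (snoc e L2)
  have "fund_cycle T e \<inter> sum_cycles T (set L1) = {}"
    using snoc.prems(2) by (auto simp: sum_cycles_def)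
  then have "fund_cycle T e - sum_cycles T (set (L1 @ L2)) = fund_cycle T e - sum_cycles T (set L2)"
    by (auto simp: sum_cycles_def)
  with snoc show ?case
    by (simp add: distinguished_edge_order_snoc flip: append_assoc) (auto simp: sum_cycles_def)
qed

section \<open>Fundamental cycles and fundamental subgraphs\<close>

locale graph_with_spanning_tree =
  fixes V :: "'a set" and E T :: "'a set set"
  assumes simple: "simple_graph V E" and spanning: "spanning_tree V E T"
begin

lemma tree_subset: "T \<subseteq> E" and tree_acyclic: "acyclic_edges T"
  and tree_connected: "connected_graph V T"
  using spanning by (simp_all add: spanning_tree_def)

lemma edgeE:
  assumes "e \<in> E" obtains u v where "u \<in> V" "v \<in> V" "u \<noteq> v" "e = {u, v}"
  using assms simple by (auto simp: simple_graph_def)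

lemma edge_ends_neq: "{x, y} \<in> E \<Longrightarrow> x \<noteq> y"
  by (erule edgeE) (auto simp: doubleton_eq_iff)

lemma finite_edges: "finite E"
proof -
  have "E \<subseteq> Pow V" "finite V" using simple by (auto simp: simple_graph_def)
  then show ?thesis by (meson finite_Pow_iff finite_subset)
qed

lemma fund_cycle_path:
  assumes "e \<in> E"
  obtains p where "is_path T p" "fund_cycle T e = insert e (path_edges p)" "path_edges p \<noteq> {}"
proof -
  obtain s t where st: "s \<in> V" "t \<in> V" "s \<noteq> t" "e = {s, t}" using assms by (rule edgeE)
  have "reach T s t" using tree_connected st(1,2) unfolding connected_graph_def by blast
  from reach_imp_path[OF this] obtain p where p: "is_path T p" "hd p = s" "last p = t" by blast
  have "p \<noteq> []" using p(1) by (simp add: is_path_def)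
  then obtain x p' where x: "p = x # p'" by (cases p) auto
  with p st(3) obtain y p'' where "p' = y # p''" by (cases p') auto
  with x have "path_edges p \<noteq> {}" by simp
  moreover have "fund_cycle T e = insert e (path_edges p)"
    using fund_cycle_eq[OF tree_acyclic p] st(4) by simp
  ultimately show ?thesis using that p(1) by blast
qed

lemma fund_cycle_subset: "e \<in> E \<Longrightarrow> fund_cycle T e \<subseteq> E"
  using tree_subset path_edges_subset by (fastforce simp: fund_cycle_def)

lemma fund_cycle_Int_tree:
  assumes "e \<in> E - T"
  obtains p where "is_path T p" "fund_cycle T e \<inter> T = path_edges p" "path_edges p \<noteq> {}"
proof -
  from assms obtain p where p: "is_path T p" "fund_cycle T e = insert e (path_edges p)"
    "path_edges p \<noteq> {}"
    by (elim DiffE fund_cycle_path)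
  moreover have "insert e (path_edges p) \<inter> T = path_edges p"
    using assms path_edges_subset[OF p(1)] by blast
  ultimately show ?thesis using that by simp
qed

lemma is_subtree_fund_cycle:
  assumes "e \<in> E - T" shows "is_subtree T (fund_cycle T e \<inter> T)"
proof -
  obtain p where p: "is_path T p" "fund_cycle T e \<inter> T = path_edges p"
    using assms by (rule fund_cycle_Int_tree)
  have "reach (path_edges p) x y" if "x \<in> \<Union> (path_edges p)" "y \<in> \<Union> (path_edges p)" for x y
    using that path_edges_vertices[of p] by (intro reach_path_edges) auto
  then show ?thesis using path_edges_subset[OF p(1)] by (simp add: is_subtree_def p(2))
qed

lemma two_le_card_fund_cycle:
  assumes "e \<in> E - T" shows "2 \<le> card (fund_cycle T e)"
proof -
  obtain g where g: "g \<in> fund_cycle T e" "g \<in> T"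
    using assms by (elim fund_cycle_Int_tree) blast
  have "{e, g} \<subseteq> fund_cycle T e" using g by (simp add: fund_cycle_def)
  moreover have "finite (fund_cycle T e)"
    using assms fund_cycle_subset finite_edges by (blast intro: finite_subset)
  ultimately have "card {e, g} \<le> card (fund_cycle T e)" by (simp add: card_mono)
  moreover have "e \<noteq> g" using assms g by blast
  ultimately show ?thesis by simp
qed

lemma fund_cycle_closed_walk:
  assumes e: "e \<in> E - T" and p: "{s, t} = e" "is_path T p" "hd p = s" "last p = t"
  shows "bij_betw (\<lambda>i. {(p @ [s]) ! i, (p @ [s]) ! Suc i}) {..<length p} (fund_cycle T e)"
proof -
  let ?q = "p @ [s]"
  have "p \<noteq> []" using p(2) by (simp add: is_path_def)
  have image: "(\<lambda>i. {?q ! i, ?q ! Suc i}) ` {..<length p} = fund_cycle T e"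
    using path_edges_conv_image[of ?q] path_edges_snoc[OF \<open>p \<noteq> []\<close>, of s]
      fund_cycle_eq[OF tree_acyclic p(2-4)] p(1,4) by (simp add: insert_commute)
  have "{?q ! i, ?q ! Suc i} \<noteq> {?q ! j, ?q ! Suc j}" if "i < j" "j < length p" for i j
  proof (cases "Suc j < length p")
    case True
    then show ?thesis
      using path_steps_neq[of p i j] that p(2) by (simp add: nth_append is_path_def)
  next
    case False
    then have j: "j = length p - 1" using that by simp
    then have "{p ! i, p ! Suc i} \<in> path_edges p" using that by (auto simp: path_edges_def)
    then have "{?q ! i, ?q ! Suc i} \<in> T"
      using j that path_edges_subset[OF p(2)] by (auto simp: nth_append)
    moreover have "{?q ! j, ?q ! Suc j} = e"
      using j p \<open>p \<noteq> []\<close> by (simp add: nth_append last_conv_nth insert_commute)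
    ultimately show ?thesis using e by auto
  qed
  then have "inj_on (\<lambda>i. {?q ! i, ?q ! Suc i}) {..<length p}"
    by (intro inj_onI) (metis lessThan_iff linorder_neqE_nat)
  with image show ?thesis by (simp add: bij_betw_def)
qed

lemma fundamental_collection_eq:
  assumes S1: "fundamental_collection E T S1" and S2: "fundamental_collection E T S2"
    and g: "g \<in> sum_cycles T S1 \<inter> sum_cycles T S2 \<inter> T"
  shows "S1 = S2"
proof -
  have "g \<noteq> {}" using g tree_subset by (auto elim: edgeE)
  then have "is_subtree T (sum_cycles T S1 \<inter> T \<union> sum_cycles T S2 \<inter> T)"
    using S1 S2 g by (intro is_subtree_Un) (auto simp: fundamental_collection_def)
  then have "is_subtree T (sum_cycles T (S1 \<union> S2) \<inter> T)"
    by (simp add: sum_cycles_def Int_Un_distrib2)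
  moreover have "S1 \<union> S2 \<subseteq> E - T" using S1 S2 by (simp add: fundamental_collection_def)
  ultimately have "\<not> S1 \<subset> S1 \<union> S2" "\<not> S2 \<subset> S1 \<union> S2"
    using S1 S2 unfolding fundamental_collection_def by blast+
  then show ?thesis by blast
qed

lemma fundamental_collections_disjoint:
  assumes S1: "fundamental_collection E T S1" and S2: "fundamental_collection E T S2"
    and "S1 \<noteq> S2"
  shows "sum_cycles T S1 \<inter> sum_cycles T S2 = {}"
proof (rule ccontr)
  assume "sum_cycles T S1 \<inter> sum_cycles T S2 \<noteq> {}"
  then obtain f e1 e2 where f: "e1 \<in> S1" "f \<in> fund_cycle T e1" "e2 \<in> S2" "f \<in> fund_cycle T e2"
    by (auto simp: sum_cycles_def)
  have "\<exists>g. g \<in> sum_cycles T S1 \<inter> sum_cycles T S2 \<inter> T"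
  proof (cases "f \<in> T")
    case True
    then show ?thesis using f by (auto simp: sum_cycles_def)
  next
    case False
    \<comment> \<open>a non-tree edge lies only in its own fundamental cycle, whose tree edges are then shared\<close>
    then have "f = e1" "f = e2" using f(2,4) by (auto simp: fund_cycle_def dest: path_edges_subset)
    moreover have "e1 \<in> E - T" using S1 f(1) by (auto simp: fundamental_collection_def)
    then obtain g where "g \<in> fund_cycle T e1" "g \<in> T" by (elim fund_cycle_Int_tree) blast
    ultimately show ?thesis using f(1,3) by (auto simp: sum_cycles_def)
  qed
  then show False using fundamental_collection_eq[OF S1 S2] \<open>S1 \<noteq> S2\<close> by blast
qed

lemma fundamental_collection_exists:
  assumes e: "e \<in> E - T" shows "\<exists>S. fundamental_collection E T S \<and> e \<in> S"
proof -
  define SS where "SS = {S. S \<subseteq> E - T \<and> e \<in> S \<and> is_subtree T (sum_cycles T S \<inter> T)}"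
  have "finite SS" unfolding SS_def using finite_edges by (auto intro: finite_subset)
  moreover have "{e} \<in> SS"
    using e is_subtree_fund_cycle[OF e] unfolding SS_def sum_cycles_def by simp
  ultimately have "\<exists>S\<in>SS. \<forall>S'\<in>SS. S \<subseteq> S' \<longrightarrow> S = S'"
    by (intro finite_has_maximal) auto
  then obtain S where S: "S \<in> SS" "\<forall>S'\<in>SS. S \<subseteq> S' \<longrightarrow> S = S'" by blast
  then have "fundamental_collection E T S"
    unfolding fundamental_collection_def SS_def by blast
  with S(1) show ?thesis by (auto simp: SS_def)
qed

lemma distinguished_edge_order_of_collection:
  assumes S: "fundamental_collection E T S" and dep: "DEP_collection T S"
  shows "\<exists>L. set L = S \<and> distinguished_edge_order T L"
proof -
  obtain L where L: "set L = S"
    "\<And>i. 0 < i \<Longrightarrow> i < length L \<Longrightarrow> 1 < card (fund_cycle T (L ! i) - sum_cycles T (set (take i L)))"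
    using dep unfolding DEP_collection_def by blast
  have "distinguished_edge_order T L"
    unfolding distinguished_edge_order_def
  proof (intro allI impI)
    fix k assume k: "k < length L"
    show "2 \<le> card (fund_cycle T (L ! k) - sum_cycles T (set (take k L)))"
    proof (cases "k = 0")
      case True
      have "L ! 0 \<in> E - T" using S L(1) k True nth_mem by (auto simp: fundamental_collection_def)
      then show ?thesis using True by (simp add: sum_cycles_def two_le_card_fund_cycle)
    next
      case False
      with L(2)[of k] k show ?thesis by simp
    qed
  qed
  with L(1) show ?thesis by blast
qed

lemma distinguished_edge_order_exists:
  assumes dep: "DEP_wrt E T" shows "\<exists>L. set L = E - T \<and> distinguished_edge_order T L"
proof -
  let ?C = "{S. fundamental_collection E T S}"
  have C_sub: "?C \<subseteq> Pow (E - T)" by (auto simp: fundamental_collection_def)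
  have orders: "\<exists>L. set L = \<Union> C \<and> distinguished_edge_order T L" if "finite C" "C \<subseteq> ?C" for C
    using that
  proof (induction C rule: finite_induct)
    case (insert S C)
    obtain L1 where L1: "set L1 = S" "distinguished_edge_order T L1"
      using insert.prems dep distinguished_edge_order_of_collection by (auto simp: DEP_wrt_def)
    obtain L2 where L2: "set L2 = \<Union> C" "distinguished_edge_order T L2"
      using insert.IH insert.prems by auto
    have "sum_cycles T S \<inter> sum_cycles T S' = {}" if "S' \<in> C" for S'
      using that insert.hyps(2) insert.prems by (intro fundamental_collections_disjoint) auto
    then have "sum_cycles T (set L1) \<inter> sum_cycles T (set L2) = {}"
      unfolding L1(1) L2(1) by (auto simp: sum_cycles_def)
    then have "distinguished_edge_order T (L1 @ L2)"
      using L1(2) L2(2) by (rule distinguished_edge_order_append[rotated 2])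
    then show ?case using L1(1) L2(1) by (intro exI[of _ "L1 @ L2"]) simp
  qed simp
  have "finite ?C" using C_sub finite_edges by (auto intro: finite_subset)
  moreover have "\<Union> ?C = E - T" using C_sub fundamental_collection_exists by blast
  ultimately show ?thesis using orders[of ?C] by simp
qed

text \<open>The edges a and b are traversed exactly once by the closed walk around the fundamental
  cycle, so giving both the angle \<alpha> turns its angle sum into R + 2\<alpha>, where R is the sum over
  the remaining edges.\<close>

lemma has_cycle_angle_adjust:
  assumes e: "e \<in> E - T" and ab: "a \<in> fund_cycle T e" "b \<in> fund_cycle T e" "a \<noteq> b"
    and \<theta>: "right_half_plane_angles E \<theta>"
  obtains \<theta>' where "right_half_plane_angles E \<theta>'" "has_cycle_angle T r \<theta>' e \<gamma>"
    "\<And>x y. {x, y} \<noteq> a \<Longrightarrow> {x, y} \<noteq> b \<Longrightarrow> \<theta>' x y = \<theta> x y"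
proof (cases "\<exists>s t p. {s, t} = e \<and> tree_le T r s t \<and> is_path T p \<and> hd p = s \<and> last p = t")
  case False
  then have "has_cycle_angle T r \<theta> e \<gamma>" unfolding has_cycle_angle_def by blast
  with \<theta> show ?thesis by (rule that) simp
next
  case True
  then obtain s t p where stp: "{s, t} = e" "tree_le T r s t" "is_path T p" "hd p = s" "last p = t"
    by blast
  define q where "q = p @ [s]"
  let ?step = "\<lambda>i. {q ! i, q ! Suc i}"
  have bij: "bij_betw ?step {..<length q - 1} (fund_cycle T e)"
    using fund_cycle_closed_walk[OF e stp(1,3-5)] by (simp add: q_def)
  have image: "?step ` {..<length q - 1} = fund_cycle T e" using bij by (simp add: bij_betw_def)
  obtain i j where ij: "i < length q - 1" "?step i = a" "j < length q - 1" "?step j = b"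
    using ab(1,2) unfolding image[symmetric] by auto
  have in_E: "?step k \<in> E" if "k < length q - 1" for k
    using that image fund_cycle_subset e by blast
  define R where "R = angle_sum \<theta> q - \<theta> (q ! i) (q ! Suc i) - \<theta> (q ! j) (q ! Suc j)"
  obtain \<alpha> where \<alpha>: "0 \<le> cos \<alpha>" "cis (2 * \<alpha>) = cis (\<gamma> - R)"
    using exists_half_angle_cos_nonneg by blast
  define \<theta>\<^sub>b where "\<theta>\<^sub>b = set_angle (q ! j) (q ! Suc j) \<alpha> \<theta>"
  define \<theta>' where "\<theta>' = set_angle (q ! i) (q ! Suc i) \<alpha> \<theta>\<^sub>b"
  have inj: "inj_on ?step {..<length q - 1}" using bij by (rule bij_betw_imp_inj_on)
  have "\<theta>\<^sub>b (q ! i) (q ! Suc i) = \<theta> (q ! i) (q ! Suc i)"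
    unfolding \<theta>\<^sub>b_def using ij ab(3) by (intro set_angle_other) simp
  then have "angle_sum \<theta>' q = R + 2 * \<alpha>"
    using angle_sum_set_angle_inj[OF inj ij(1), of \<alpha> \<theta>\<^sub>b]
      angle_sum_set_angle_inj[OF inj ij(3), of \<alpha> \<theta>]
    by (simp add: \<theta>'_def \<theta>\<^sub>b_def R_def)
  then have "cis (angle_sum \<theta>' q) = cis R * cis (\<gamma> - R)" by (simp add: \<alpha>(2) flip: cis_mult)
  then have "cis (angle_sum \<theta>' q) = cis \<gamma>" by (simp add: cis_mult)
  moreover have "s \<noteq> t" using e stp(1) edge_ends_neq by blast
  ultimately have cycle: "has_cycle_angle T r \<theta>' e \<gamma>"
    unfolding has_cycle_angle_def q_def
    using oriented_fund_cycle_unique[OF tree_acyclic _ _ stp(2-5)] stp(1) by metis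
  have rhp: "right_half_plane_angles E \<theta>'"
    unfolding \<theta>'_def \<theta>\<^sub>b_def using \<theta> \<alpha>(1) in_E ij(1,3) edge_ends_neq
    by (intro right_half_plane_angles_set_angle) auto
  have "\<theta>' x y = \<theta> x y" if "{x, y} \<noteq> a" "{x, y} \<noteq> b" for x y
    using that ij by (simp add: \<theta>'_def \<theta>\<^sub>b_def set_angle_other)
  with rhp cycle show ?thesis by (rule that)
qed

lemma angles_for_distinguished_edge_order:
  assumes "distinguished_edge_order T L" "set L \<subseteq> E - T"
  shows "\<exists>\<theta>. right_half_plane_angles E \<theta> \<and> (\<forall>e\<in>set L. has_cycle_angle T r \<theta> e (c e))"
  using assms
proof (induction L rule: rev_induct)
  case Nil
  have "right_half_plane_angles E (\<lambda>x y. 0)" by (simp add: right_half_plane_angles_def)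
  then show ?case by auto
next
  case (snoc e L)
  then have e: "e \<in> E - T" and new: "2 \<le> card (fund_cycle T e - sum_cycles T (set L))"
    by (simp_all add: distinguished_edge_order_snoc)
  obtain \<theta> where \<theta>: "right_half_plane_angles E \<theta>" "\<forall>e'\<in>set L. has_cycle_angle T r \<theta> e' (c e')"
    using snoc by (auto simp: distinguished_edge_order_snoc)
  obtain a b where ab: "a \<in> fund_cycle T e - sum_cycles T (set L)"
    "b \<in> fund_cycle T e - sum_cycles T (set L)" "a \<noteq> b"
    using new by (auto simp: numeral_2_eq_2 card_le_Suc_iff)
  obtain \<theta>' where \<theta>': "right_half_plane_angles E \<theta>'" "has_cycle_angle T r \<theta>' e (c e)"
    "\<And>x y. {x, y} \<noteq> a \<Longrightarrow> {x, y} \<noteq> b \<Longrightarrow> \<theta>' x y = \<theta> x y"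
    using has_cycle_angle_adjust[OF e _ _ ab(3) \<theta>(1)] ab(1,2) by blast
  have "has_cycle_angle T r \<theta>' e' (c e')" if "e' \<in> set L" for e'
  proof -
    have "fund_cycle T e' \<subseteq> sum_cycles T (set L)" using that by (auto simp: sum_cycles_def)
    then have "has_cycle_angle T r \<theta>' e' (c e') \<longleftrightarrow> has_cycle_angle T r \<theta> e' (c e')"
      using ab by (intro has_cycle_angle_cong \<theta>'(3)) auto
    then show ?thesis using \<theta>(2) that by blast
  qed
  with \<theta>' show ?case by auto
qed

end

theorem theorem4p2:
  fixes V :: "'a set" and E T :: "'a set set" and r :: 'a
  assumes "simple_graph V E"
    and "connected_graph V E"
    and "normal_spanning_tree V E T r"
    and "DEP_wrt E T"
  shows "GNRP_wrt V E T r"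
proof -
  interpret graph_with_spanning_tree V E T
    using assms(1,3) by unfold_locales (simp_all add: normal_spanning_tree_def)
  obtain L where L: "set L = E - T" "distinguished_edge_order T L"
    using distinguished_edge_order_exists[OF assms(4)] by blast
  show ?thesis
    by (rule GNRP_wrt_if_angles) (use angles_for_distinguished_edge_order[OF L(2)] L(1) in simp)
qed

end
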